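(* Let $n\ge 6$ with $3\mid n$. Then the metric dimension of $H(n)$ is $n-\frac{n}{3}$.
   Context: For $n\ge 5$, $H(n)$ is the graph with vertex set $V_1\cup V_2$, where $V_1=\{v_1,\dots,v_n\}$ and $V_2=\{v_iv_j: 1\le i<j\le n\}$ (each $v_iv_j$ a single vertex), and where $v_r\in V_1$ is adjacent to $v_iv_j\in V_2$ iff $r=i$ or $r=j$; there are no other edges. $d(u,v)$ is the shortest-path distance. A set $Q$ of vertices is a resolving set of a graph $G$ if any two distinct vertices $x,y$ satisfy $(d(x,q))_{q\in Q}\neq(d(y,q))_{q\in Q}$; the metric dimension is the minimum size of a resolving set. *)

theory Defs
  imports Main
begin

fun walk_len :: "'a set \<Rightarrow> ('a \<Rightarrow> 'a \<Rightarrow> bool) \<Rightarrow> nat \<Rightarrow> 'a \<Rightarrow> 'a \<Rightarrow> bool" where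
  "walk_len V E 0 x y = (x \<in> V \<and> x = y)"
| "walk_len V E (Suc k) x y = (x \<in> V \<and> (\<exists>z\<in>V. E x z \<and> walk_len V E k z y))"

text \<open>Shortest-path distance (only used for connected graphs).\<close>
definition gdist :: "'a set \<Rightarrow> ('a \<Rightarrow> 'a \<Rightarrow> bool) \<Rightarrow> 'a \<Rightarrow> 'a \<Rightarrow> nat" where
  "gdist V E x y = (LEAST k. walk_len V E k x y)"

definition resolving_set :: "'a set \<Rightarrow> ('a \<Rightarrow> 'a \<Rightarrow> bool) \<Rightarrow> 'a set \<Rightarrow> bool" where
  "resolving_set V E Q \<longleftrightarrow> Q \<subseteq> V \<and>
     (\<forall>x\<in>V. \<forall>y\<in>V. x \<noteq> y \<longrightarrow> (\<exists>q\<in>Q. gdist V E x q \<noteq> gdist V E y q))"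

definition metric_dimension :: "'a set \<Rightarrow> ('a \<Rightarrow> 'a \<Rightarrow> bool) \<Rightarrow> nat" where
  "metric_dimension V E = (LEAST k. \<exists>Q. resolving_set V E Q \<and> finite Q \<and> card Q = k)"

datatype hvert = V1 nat | V2 nat nat  \<comment> \<open>V2 i j stands for v_i v_j with i < j\<close>

definition H_verts :: "nat \<Rightarrow> hvert set" where
  "H_verts n = {V1 r | r. 1 \<le> r \<and> r \<le> n} \<union> {V2 i j | i j. 1 \<le> i \<and> i < j \<and> j \<le> n}"

fun H_adj :: "hvert \<Rightarrow> hvert \<Rightarrow> bool" where
  "H_adj (V1 r) (V2 i j) = (r = i \<or> r = j)"
| "H_adj (V2 i j) (V1 r) = (r = i \<or> r = j)"
| "H_adj _ _ = False"

end

theory Submission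
  imports Defs
begin

(* Identify v_r with {r} and v_i v_j with {i, j}.  Then H(n) is the graph of the one- and
   two-element subsets of {1..n}, adjacent when they differ in one element, and the distance
   between two vertices is the size of the symmetric difference of their sets.

   Lower bound: the vertices v_x outside a resolving set Q can only be told apart by the pairs
   in Q containing x, so these incidence sets are pairwise distinct; since every pair is incident
   to at most two points, a discharging argument gives 2 (n - 1) <= 3 |Q|.

   Upper bound: for n = 3m, split {1..n} into blocks {3t+1, 3t+2, 3t+3} and take the 2m pairs
   {3t+1, 3t+2} and {3t+2, 3t+3}.  Distances to them record, block by block, how many elements
   of a vertex's set lie in each of the two overlapping windows.  This determines the part of
   the set in each block, up to the swap {3t+1, 3t+3} versus {3t+2}; that swap is impossible,
   because the set contained in the block has no element in the block where the other set has
   its second element. *)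

lemma potential_le_walk_len:
  assumes lip: "\<And>x z. x \<in> V \<Longrightarrow> z \<in> V \<Longrightarrow> E x z \<Longrightarrow> d x \<le> Suc (d z)"
    and "d y = 0"
  shows "walk_len V E k x y \<Longrightarrow> d x \<le> k"
proof (induction k arbitrary: x)
  case 0
  then show ?case using \<open>d y = 0\<close> by simp
next
  case (Suc k)
  then obtain z where "x \<in> V" "z \<in> V" "E x z" "walk_len V E k z y" by auto
  with Suc.IH lip show ?case by fastforce
qed

lemma walk_len_along_descent:
  assumes descent: "\<And>x. x \<in> V \<Longrightarrow> x \<noteq> y \<Longrightarrow> \<exists>z\<in>V. E x z \<and> Suc (d z) = d x"
    and "d y = 0" and "y \<in> V"
  shows "x \<in> V \<Longrightarrow> walk_len V E (d x) x y"
proof (induction "d x" arbitrary: x)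
  case 0
  then have "x = y" using descent by fastforce
  then show ?case using \<open>y \<in> V\<close> \<open>d y = 0\<close> by simp
next
  case (Suc k)
  then have "x \<noteq> y" using \<open>d y = 0\<close> by auto
  then obtain z where "z \<in> V" "E x z" "Suc (d z) = d x" using descent \<open>x \<in> V\<close> by blast
  with Suc show ?case by (metis Suc_inject walk_len.simps(2))
qed

lemma gdist_eqI:
  assumes "\<And>x z. x \<in> V \<Longrightarrow> z \<in> V \<Longrightarrow> E x z \<Longrightarrow> d x \<le> Suc (d z)"
    and "\<And>x. x \<in> V \<Longrightarrow> x \<noteq> y \<Longrightarrow> \<exists>z\<in>V. E x z \<and> Suc (d z) = d x"
    and "d y = 0" and "x \<in> V" and "y \<in> V"
  shows "gdist V E x y = d x"
  unfolding gdist_def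
proof (rule Least_equality)
  show "walk_len V E (d x) x y"
    using walk_len_along_descent[of V y E d x] assms(2-5) by blast
next
  show "d x \<le> k" if "walk_len V E k x y" for k
    using potential_le_walk_len[of V E d y k x] assms(1,3) that by blast
qed

lemma metric_dimension_eqI:
  assumes "resolving_set V E Q" "finite Q"
    and "\<And>Q'. resolving_set V E Q' \<Longrightarrow> finite Q' \<Longrightarrow> card Q \<le> card Q'"
  shows "metric_dimension V E = card Q"
  unfolding metric_dimension_def by (rule Least_equality) (use assms in blast)+

lemma card_sym_diff_triangle:
  assumes "finite A" "finite B" "finite C"
  shows "card (sym_diff A C) \<le> card (sym_diff A B) + card (sym_diff B C)"
proof -
  have "card (sym_diff A C) \<le> card (sym_diff A B \<union> sym_diff B C)"
    by (rule card_mono) (use assms in auto)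
  also have "\<dots> \<le> card (sym_diff A B) + card (sym_diff B C)"
    by (rule card_Un_le)
  finally show ?thesis .
qed

lemma card_sym_diff_add_Int:
  assumes "finite A" "finite B"
  shows "card (sym_diff A B) + 2 * card (A \<inter> B) = card A + card B"
proof -
  have "card (sym_diff A B) = card (A - B) + card (B - A)"
    by (rule card_Un_disjoint) (use assms in auto)
  moreover have "card A = card (A \<inter> B) + card (A - B)" "card B = card (B \<inter> A) + card (B - A)"
    using assms by (simp_all add: card_Int_Diff)
  ultimately show ?thesis by (simp add: Int_commute)
qed

lemma card_sym_diff_singleton:
  "finite B \<Longrightarrow> card (sym_diff {x} B) = (if x \<in> B then card B - 1 else Suc (card B))"
  by (cases "x \<in> B") (auto simp: insert_absorb Un_Diff_cancel2 simp flip: insert_is_Un)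

lemma card_Int_doubleton:
  "a \<noteq> b \<Longrightarrow> card (A \<inter> {a, b}) = of_bool (a \<in> A) + of_bool (b \<in> A)"
  by (auto simp: Int_insert_right)

lemma card_le_if_inj_on_incidence_sets:
  fixes X :: "'a set" and P :: "'b set" and E :: "'b \<Rightarrow> 'a set"
  assumes "finite X" "finite P"
    and small: "\<And>p. p \<in> P \<Longrightarrow> card (X \<inter> E p) \<le> 2"
    and inj: "inj_on (\<lambda>x. {p \<in> P. x \<in> E p}) X"
  shows "2 * card X \<le> 3 * card P + 2"
proof -
  define S where "S x = {p \<in> P. x \<in> E p}" for x
  \<comment> \<open>Discharging: x collects a unit from every p with x \<in> E p, and one more from p
    when p is the only one; by injectivity each p pays that bonus at most once.\<close>
  define w :: "'a \<Rightarrow> 'b \<Rightarrow> nat" where "w x p = of_bool (x \<in> E p) + of_bool (S x = {p})" for x p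
  have S_eq: "x = y" if "x \<in> X" "y \<in> X" "S x = S y" for x y
    using inj that unfolding S_def by (auto dest: inj_onD)
  have per_edge: "(\<Sum>x\<in>X. w x p) \<le> 3" if "p \<in> P" for p
  proof -
    have "card (X \<inter> {x. S x = {p}}) \<le> 1"
      using S_eq \<open>finite X\<close> by (auto simp: card_le_Suc0_iff_eq)
    moreover have "(\<Sum>x\<in>X. w x p) = card (X \<inter> E p) + card (X \<inter> {x. S x = {p}})"
      using \<open>finite X\<close> by (simp add: w_def sum.distrib)
    ultimately show ?thesis using small[OF that] by linarith
  qed
  have per_vertex: "2 \<le> (\<Sum>p\<in>P. w x p)" if "S x \<noteq> {}" for x
  proof -
    have sum_eq: "(\<Sum>p\<in>P. w x p) = card (S x) + card (P \<inter> {p. S x = {p}})"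
      using \<open>finite P\<close> by (simp add: w_def sum.distrib S_def Int_def)
    have "finite (S x)" using \<open>finite P\<close> by (simp add: S_def)
    show ?thesis
    proof (cases "card (S x) = 1")
      case True
      then obtain p where "S x = {p}" by (auto simp: card_Suc_eq)
      then have "P \<inter> {p. S x = {p}} = {p}" by (auto simp: S_def)
      then show ?thesis using sum_eq True by simp
    next
      case False
      then have "2 \<le> card (S x)" using \<open>finite (S x)\<close> \<open>S x \<noteq> {}\<close> by (cases "card (S x)") auto
      then show ?thesis using sum_eq by linarith
    qed
  qed
  let ?X' = "{x \<in> X. S x \<noteq> {}}"
  have "card {x \<in> X. S x = {}} \<le> 1"
    using S_eq \<open>finite X\<close> by (auto simp: card_le_Suc0_iff_eq)
  moreover have "card X = card ?X' + card {x \<in> X. S x = {}}"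
    using \<open>finite X\<close> by (subst card_Un_disjoint[symmetric]) (auto intro: arg_cong[where f = card])
  ultimately have "2 * card X \<le> (\<Sum>x\<in>?X'. 2) + 2" by simp
  also have "(\<Sum>x\<in>?X'. 2) \<le> (\<Sum>x\<in>?X'. \<Sum>p\<in>P. w x p)"
    by (rule sum_mono) (use per_vertex in blast)
  also have "\<dots> \<le> (\<Sum>x\<in>X. \<Sum>p\<in>P. w x p)"
    by (rule sum_mono2) (use \<open>finite X\<close> in auto)
  also have "\<dots> = (\<Sum>p\<in>P. \<Sum>x\<in>X. w x p)"
    by (rule sum.swap)
  also have "\<dots> \<le> (\<Sum>p\<in>P. 3)"
    by (rule sum_mono) (use per_edge in blast)
  finally show ?thesis by simp
qed

lemma overlapping_windows_cases:
  assumes "distinct [p, q, r]"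
    and "card (A \<inter> {p, q}) = card (B \<inter> {p, q})" "card (A \<inter> {q, r}) = card (B \<inter> {q, r})"
  shows "A \<inter> {p, q, r} = B \<inter> {p, q, r}
    \<or> A \<inter> {p, q, r} = {p, r} \<and> B \<inter> {p, q, r} = {q}
    \<or> A \<inter> {p, q, r} = {q} \<and> B \<inter> {p, q, r} = {p, r}"
  using assms
  by (cases "p \<in> A"; cases "q \<in> A"; cases "r \<in> A"; cases "p \<in> B"; cases "q \<in> B"; cases "r \<in> B")
    (auto simp: card_Int_doubleton)

definition block :: "nat \<Rightarrow> nat set" where
  "block t = {3*t+1, 3*t+2, 3*t+3}"

definition window_counts :: "nat set \<Rightarrow> nat \<Rightarrow> nat \<times> nat" where
  "window_counts A t = (card (A \<inter> {3*t+1, 3*t+2}), card (A \<inter> {3*t+2, 3*t+3}))"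

lemma block_cover:
  fixes x :: nat
  assumes "1 \<le> x" "x \<le> 3 * m"
  shows "\<exists>t<m. x \<in> block t"
proof -
  have "x = 3 * ((x - 1) div 3) + (x - 1) mod 3 + 1" using assms(1) by simp
  then show ?thesis using assms by (intro exI[of _ "(x - 1) div 3"]) (auto simp: block_def)
qed

lemma window_counts_block_swap_impossible:
  assumes "A \<subseteq> {1..3*m}" and B: "B \<subseteq> {1..3*m}" and card_eq: "card A = card B"
    and "card A \<le> 2" and win: "\<forall>t<m. window_counts A t = window_counts B t"
    and A_block: "A \<inter> block t = {3*t+1, 3*t+3}" and B_block: "B \<inter> block t = {3*t+2}"
  shows False
proof -
  have "finite A" using assms(1) finite_subset by blast
  then have A: "A = {3*t+1, 3*t+3}"
    using \<open>card A \<le> 2\<close> A_block by (intro card_seteq[symmetric]) (auto simp: block_def)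
  have "\<not> B \<subseteq> block t"
  proof
    assume "B \<subseteq> block t"
    then have "B = {3*t+2}" using B_block by blast
    then show False using card_eq A by simp
  qed
  then obtain y where y: "y \<in> B" "y \<notin> block t" by blast
  moreover from y(1) B have "y \<in> {1..3*m}" by blast
  ultimately obtain t' where t': "t' < m" "y \<in> block t'"
    using block_cover[of y m] by auto
  have "t' \<noteq> t" using y t' by auto
  then have "window_counts A t' = (0, 0)"
    unfolding A window_counts_def by (simp add: card_Int_doubleton; presburger)
  then show False
    using win t' y(1) by (auto simp: window_counts_def block_def card_Int_doubleton)
qed

lemma window_counts_determine_small_set:
  assumes "A \<subseteq> {1..3*m}" "B \<subseteq> {1..3*m}" "card A = card B" "card A \<le> 2"
    and win: "\<forall>t<m. window_counts A t = window_counts B t"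
  shows "A = B"
proof -
  have blocks_eq: "A \<inter> block t = B \<inter> block t" if "t < m" for t
  proof (rule ccontr)
    assume "A \<inter> block t \<noteq> B \<inter> block t"
    moreover have "distinct [3*t+1, 3*t+2, 3*t+3]" by simp
    note overlapping_windows_cases[OF this, of A B]
    ultimately consider
        "A \<inter> block t = {3*t+1, 3*t+3}" "B \<inter> block t = {3*t+2}"
      | "B \<inter> block t = {3*t+1, 3*t+3}" "A \<inter> block t = {3*t+2}"
      using win \<open>t < m\<close> by (auto simp: window_counts_def block_def)
    then show False
      using window_counts_block_swap_impossible[of A m B t]
        window_counts_block_swap_impossible[of B m A t] assms
      by cases auto
  qed
  have "x \<in> A \<longleftrightarrow> x \<in> B" if "x \<in> {1..3*m}" for x
    using that block_cover[of x m] blocks_eq by auto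
  then show ?thesis using assms(1,2) by blast
qed

fun ends :: "hvert \<Rightarrow> nat set" where
  "ends (V1 r) = {r}"
| "ends (V2 i j) = {i, j}"

lemma finite_ends [simp]: "finite (ends u)"
  by (cases u) auto

lemma V1_in_H_verts [simp]: "V1 r \<in> H_verts n \<longleftrightarrow> 1 \<le> r \<and> r \<le> n"
  unfolding H_verts_def by auto

lemma V2_in_H_verts [simp]: "V2 i j \<in> H_verts n \<longleftrightarrow> 1 \<le> i \<and> i < j \<and> j \<le> n"
  unfolding H_verts_def by auto

lemma ends_H_verts:
  assumes "u \<in> H_verts n"
  shows "ends u \<subseteq> {1..n}" and "1 \<le> card (ends u)" and "card (ends u) \<le> 2"
  using assms by (cases u; auto)+

lemma inj_on_ends: "inj_on ends (H_verts n)"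
proof
  fix u w assume "u \<in> H_verts n" "w \<in> H_verts n" "ends u = ends w"
  then show "u = w"
    by (cases u; cases w) (auto simp: doubleton_eq_iff)
qed

lemma card_sym_diff_ends_le_if_H_adj: "H_adj u z \<Longrightarrow> card (sym_diff (ends u) (ends z)) \<le> 1"
  by (cases "(u, z)" rule: H_adj.cases) (auto simp: card_insert_if)

lemma H_adj_step_closer:
  assumes u: "u \<in> H_verts n" and w: "w \<in> H_verts n" and "u \<noteq> w"
  shows "\<exists>z\<in>H_verts n. H_adj u z \<and>
    Suc (card (sym_diff (ends z) (ends w))) = card (sym_diff (ends u) (ends w))"
proof -
  obtain z x where z: "z \<in> H_verts n" "H_adj u z" and x: "x \<in> sym_diff (ends u) (ends w)"
    and toggle: "sym_diff (ends z) (ends w) = sym_diff (ends u) (ends w) - {x}"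
  proof (cases u)
    case (V1 r)
    have "ends w \<noteq> {r}"
      using inj_on_ends u w \<open>u \<noteq> w\<close> V1 by (metis ends.simps(1) inj_on_contraD)
    moreover have "ends w \<noteq> {}" using ends_H_verts(2)[OF w] by auto
    ultimately obtain b where b: "b \<in> ends w" "b \<noteq> r" by blast
    have "b \<in> {1..n}" using ends_H_verts(1)[OF w] b(1) by auto
    then have "\<exists>z\<in>H_verts n. H_adj u z \<and> ends z = {r, b}"
      using u V1 \<open>b \<noteq> r\<close> by (cases "r < b") (auto intro: bexI[of _ "V2 r b"] bexI[of _ "V2 b r"])
    then obtain z where "z \<in> H_verts n" "H_adj u z" "ends z = {r, b}" by blast
    then show ?thesis using that[of z b] b V1 by auto
  next
    case (V2 i j)
    have "\<not> {i, j} \<subseteq> ends w"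
    proof
      assume "{i, j} \<subseteq> ends w"
      moreover have "card {i, j} = 2" using u V2 by simp
      ultimately have "ends u = ends w"
        using ends_H_verts(3)[OF w] V2 by (simp add: card_seteq)
      then show False using inj_on_ends u w \<open>u \<noteq> w\<close> by (metis inj_on_contraD)
    qed
    then obtain a where a: "a \<in> {i, j}" "a \<notin> ends w" by blast
    define z where "z = V1 (if a = i then j else i)"
    have "z \<in> H_verts n" "H_adj u z" "ends z = ends u - {a}"
      using a u V2 by (auto simp: z_def)
    moreover from this(3) have "sym_diff (ends z) (ends w) = sym_diff (ends u) (ends w) - {a}"
      using a(2) by blast
    moreover have "a \<in> sym_diff (ends u) (ends w)" using a V2 by auto
    ultimately show ?thesis using that by blast
  qed
  have "Suc (card (sym_diff (ends z) (ends w))) = card (sym_diff (ends u) (ends w))"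
    unfolding toggle by (rule card_Suc_Diff1) (use x in auto)
  then show ?thesis using z by blast
qed

lemma gdist_H_verts:
  assumes "u \<in> H_verts n" "w \<in> H_verts n"
  shows "gdist (H_verts n) H_adj u w = card (sym_diff (ends u) (ends w))"
proof (rule gdist_eqI)
  fix x z assume "H_adj x z"
  then show "card (sym_diff (ends x) (ends w)) \<le> Suc (card (sym_diff (ends z) (ends w)))"
    using card_sym_diff_triangle[of "ends x" "ends z" "ends w"] card_sym_diff_ends_le_if_H_adj
    by fastforce
next
  fix x assume "x \<in> H_verts n" "x \<noteq> w"
  then show "\<exists>z\<in>H_verts n. H_adj x z \<and>
      Suc (card (sym_diff (ends z) (ends w))) = card (sym_diff (ends x) (ends w))"
    using H_adj_step_closer \<open>w \<in> H_verts n\<close> by blast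
qed (use assms in auto)

lemma resolving_set_H_verts_card_ge:
  assumes R: "resolving_set (H_verts n) H_adj Q" and "finite Q"
  shows "2 * (n - 1) \<le> 3 * card Q"
proof -
  have QV: "Q \<subseteq> H_verts n" using R unfolding resolving_set_def by blast
  define X where "X = {x \<in> {1..n}. V1 x \<notin> Q}"
  define P where "P = Q - range V1"
  have "inj_on (\<lambda>x. {p \<in> P. x \<in> ends p}) X"
  proof (rule inj_onI, rule ccontr)
    fix x y assume x: "x \<in> X" and y: "y \<in> X" and "x \<noteq> y"
      and same: "{p \<in> P. x \<in> ends p} = {p \<in> P. y \<in> ends p}"
    have "V1 x \<in> H_verts n" "V1 y \<in> H_verts n" using x y by (auto simp: X_def)
    then obtain q where q: "q \<in> Q"
      and "card (sym_diff {x} (ends q)) \<noteq> card (sym_diff {y} (ends q))"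
      using R \<open>x \<noteq> y\<close> QV gdist_H_verts unfolding resolving_set_def
      by (metis ends.simps(1) hvert.inject(1) subsetD)
    then have "(x \<in> ends q) \<noteq> (y \<in> ends q)"
      by (auto simp: card_sym_diff_singleton split: if_splits)
    moreover have "q \<notin> range V1" using q x y calculation by (auto simp: X_def)
    ultimately show False using same q by (auto simp: P_def)
  qed
  moreover have "card (X \<inter> ends p) \<le> 2" if "p \<in> P" for p
    using ends_H_verts(3) QV that card_mono[of "ends p" "X \<inter> ends p"]
    unfolding P_def by force
  ultimately have "2 * card X \<le> 3 * card P + 2"
    using \<open>finite Q\<close> by (intro card_le_if_inj_on_incidence_sets) (auto simp: X_def P_def)
  moreover have "card Q = card P + card (Q \<inter> range V1)"
    using \<open>finite Q\<close> by (subst card_Un_disjoint[symmetric]) (auto simp: P_def intro: arg_cong[where f = card])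
  moreover have "X \<subseteq> {1..n}" by (auto simp: X_def)
  moreover have "Q \<inter> range V1 = V1 ` ({1..n} - X)"
    using QV by (auto simp: X_def)
  then have "card (Q \<inter> range V1) = n - card X"
    using \<open>X \<subseteq> {1..n}\<close> by (simp add: card_image inj_on_def card_Diff_subset finite_subset)
  ultimately show ?thesis using card_mono[of "{1..n}" X] by force
qed

definition landmarks :: "nat \<Rightarrow> hvert set" where
  "landmarks m = (\<lambda>t. V2 (3*t+1) (3*t+2)) ` {..<m} \<union> (\<lambda>t. V2 (3*t+2) (3*t+3)) ` {..<m}"

lemma landmarks_subset_H_verts: "landmarks m \<subseteq> H_verts (3*m)"
  by (auto simp: landmarks_def)

lemma card_landmarks: "card (landmarks m) = 2 * m"
proof -
  have "inj_on (\<lambda>t. V2 (3*t+1) (3*t+2)) {..<m}" "inj_on (\<lambda>t. V2 (3*t+2) (3*t+3)) {..<m}"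
    by (auto simp: inj_on_def)
  moreover have "(\<lambda>t. V2 (3*t+1) (3*t+2)) ` {..<m} \<inter> (\<lambda>t. V2 (3*t+2) (3*t+3)) ` {..<m} = {}"
    by auto presburger
  ultimately show ?thesis
    unfolding landmarks_def by (simp add: card_Un_disjoint card_image)
qed

lemma resolving_set_landmarks:
  assumes "0 < m"
  shows "resolving_set (H_verts (3*m)) H_adj (landmarks m)"
  unfolding resolving_set_def
proof (intro conjI landmarks_subset_H_verts ballI impI)
  fix u w assume u: "u \<in> H_verts (3*m)" and w: "w \<in> H_verts (3*m)" and "u \<noteq> w"
  let ?A = "ends u" and ?B = "ends w"
  show "\<exists>q\<in>landmarks m. gdist (H_verts (3*m)) H_adj u q \<noteq> gdist (H_verts (3*m)) H_adj w q"
  proof (rule ccontr)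
    assume "\<not> ?thesis"
    then have "card (sym_diff ?A (ends q)) = card (sym_diff ?B (ends q))" if "q \<in> landmarks m" for q
      using that u w landmarks_subset_H_verts gdist_H_verts by (metis subsetD)
    then have counts: "card ?A + 2 * card (?B \<inter> ends q) = card ?B + 2 * card (?A \<inter> ends q)"
      if "q \<in> landmarks m" for q
      using that card_sym_diff_add_Int[of ?A "ends q"] card_sym_diff_add_Int[of ?B "ends q"] by force
    have L: "V2 (3*t+1) (3*t+2) \<in> landmarks m" and R: "V2 (3*t+2) (3*t+3) \<in> landmarks m"
      if "t < m" for t
      using that by (auto simp: landmarks_def)
    have "card ?A = card ?B"
      using counts[OF L[OF assms]] ends_H_verts(2,3)[OF u] ends_H_verts(2,3)[OF w] by presburger
    then have "?A = ?B"
      using ends_H_verts[OF u] ends_H_verts[OF w] counts[OF L] counts[OF R]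
      by (intro window_counts_determine_small_set[of _ m]) (auto simp: window_counts_def)
    then show False using inj_on_ends u w \<open>u \<noteq> w\<close> by (metis inj_on_contraD)
  qed
qed

theorem theorem3p7:
  fixes n :: nat
  assumes "n \<ge> 6" and "3 dvd n"
  shows "metric_dimension (H_verts n) H_adj = n - n div 3"
proof -
  obtain m where n: "n = 3 * m" and "0 < m" using assms by auto
  have "finite (landmarks m)" by (simp add: landmarks_def)
  then have "metric_dimension (H_verts n) H_adj = card (landmarks m)"
    unfolding n
  proof (rule metric_dimension_eqI[OF resolving_set_landmarks[OF \<open>0 < m\<close>]])
    fix Q assume "resolving_set (H_verts (3*m)) H_adj Q" "finite Q"
    then have "2 * (3 * m - 1) \<le> 3 * card Q" by (rule resolving_set_H_verts_card_ge)
    then show "card (landmarks m) \<le> card Q" unfolding card_landmarks by linarith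
  qed
  then show ?thesis using n card_landmarks by simp
qed

end
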